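(* Let $m_1,\dots,m_r,n$ be positive integers with $m=\sum_{i=1}^r m_i\le n$, and suppose that $\sum_{i=1}^r\lfloor m_i n/(m+1)\rfloor\ge\lfloor mn/(m+1)\rfloor$ and $m_i n/(m+1)\ge\lceil m_i n/(m+2)\rceil$ for all $i\in[r]$. Let $h$ be the least integer $t\ge m+2$ such that either there is some $i\in[r]$ with $\frac{m_i n}{t}<\big\lceil \frac{m_i n}{t+1}\big\rceil$, or there are indices $i\ne j$ such that $t$ divides neither $m_i n$ nor $m_j n$. Then $K_{m_1 n,\dots,m_r n}$ is equitably $k$-colorable for every integer $k$ with $\sum_{i=1}^r\lceil m_i n/h\rceil\le k\le\lceil mn/(m+1)\rceil-1$.
   Context: A (proper) $k$-coloring of a graph $G$ is a map $f:V(G)\to\{1,\dots,k\}$ with $f(x)\ne f(y)$ whenever $xy\in E(G)$; an equitable $k$-coloring is a $k$-coloring in which any two color classes differ in size by at most $1$; $G$ is equitably $k$-colorable if it has one. $K_{a_1,\dots,a_r}$ denotes the complete multipartite graph with parts of sizes $a_1,\dots,a_r$. $[r]=\{1,\dots,r\}$. *)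

theory Defs
  imports Complex_Main
begin

definition proper_coloring :: "'v set \<Rightarrow> ('v \<Rightarrow> 'v \<Rightarrow> bool) \<Rightarrow> nat \<Rightarrow> ('v \<Rightarrow> nat) \<Rightarrow> bool" where
  "proper_coloring V E k f \<longleftrightarrow>
     (\<forall>x\<in>V. f x \<in> {1..k}) \<and> (\<forall>x\<in>V. \<forall>y\<in>V. E x y \<longrightarrow> f x \<noteq> f y)"

definition equitable_coloring :: "'v set \<Rightarrow> ('v \<Rightarrow> 'v \<Rightarrow> bool) \<Rightarrow> nat \<Rightarrow> ('v \<Rightarrow> nat) \<Rightarrow> bool" where
  "equitable_coloring V E k f \<longleftrightarrow> proper_coloring V E k f \<and>
     (\<forall>c\<in>{1..k}. \<forall>d\<in>{1..k}. card {x\<in>V. f x = c} \<le> card {x\<in>V. f x = d} + 1)"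

definition equitably_colorable :: "'v set \<Rightarrow> ('v \<Rightarrow> 'v \<Rightarrow> bool) \<Rightarrow> nat \<Rightarrow> bool" where
  "equitably_colorable V E k \<longleftrightarrow> (\<exists>f. equitable_coloring V E k f)"

text \<open>Complete multipartite graph K_{a_1,...,a_r}: vertex (i,v) lies in part i (1 \<le> i \<le> r, v < a i);
  two vertices are adjacent iff they lie in different parts.\<close>

definition cmp_vertices :: "nat \<Rightarrow> (nat \<Rightarrow> nat) \<Rightarrow> (nat \<times> nat) set" where
  "cmp_vertices r a = {(i, v). i \<in> {1..r} \<and> v < a i}"

definition cmp_adj :: "nat \<times> nat \<Rightarrow> nat \<times> nat \<Rightarrow> bool" where
  "cmp_adj x y \<longleftrightarrow> fst x \<noteq> fst y"

end

theory Submission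
  imports Defs
begin

text \<open>Write a i = m_i n, N = sum of the a i, and s = N div k. If
  ceil(a i / (s+1)) <= floor(a i / s) for every part and
  sum ceil(a i / (s+1)) <= k <= sum floor(a i / s), part i can be given p i colours, used cyclically,
  with a i / (s+1) <= p i <= a i / s and sum p i = k; all colour classes then have size s or s+1.
  The bounds on k put s into [m+1, h]. For s = m+1 the required inequalities are the floor and
  ceiling hypotheses. For m+2 <= s < h they hold because s is below the least bad threshold h:
  all parts but one are multiples of s (and of s+1 if s+1 < h), which makes the sums of floors and
  ceilings equal to floor(N/s) and ceil(N/(s+1)). For s = h the bounds force N = k h and every part
  to be a multiple of h.\<close>

definition ceil_div :: "nat \<Rightarrow> nat \<Rightarrow> nat" where
  "ceil_div a b = (a + b - 1) div b"

lemma ceil_div_0_left [simp]: "ceil_div 0 b = 0"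
  by (cases b) (simp_all add: ceil_div_def)

lemma ceil_div_le_iff:
  assumes "0 < b"
  shows "ceil_div a b \<le> p \<longleftrightarrow> a \<le> p * b"
proof -
  have "ceil_div a b \<le> p \<longleftrightarrow> (a + b - 1) div b < Suc p"
    unfolding ceil_div_def by (rule le_simps(2)[symmetric])
  also have "\<dots> \<longleftrightarrow> a + b - 1 < Suc p * b"
    using assms by (simp add: div_less_iff_less_mult)
  also have "\<dots> \<longleftrightarrow> a \<le> p * b"
    using assms by auto
  finally show ?thesis .
qed

lemma le_ceil_div_mult: "0 < b \<Longrightarrow> a \<le> ceil_div a b * b"
  using ceil_div_le_iff by blast

lemma ceiling_divide_of_nat_eq:
  assumes "0 < b"
  shows "\<lceil>real a / real b\<rceil> = int (ceil_div a b)"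
proof -
  have "a \<le> ceil_div a b * b"
    using le_ceil_div_mult[OF assms] .
  then have "real a / real b \<le> real (ceil_div a b)"
    using assms by (simp add: divide_le_eq flip: of_nat_mult)
  moreover have "ceil_div a b * b \<le> a + b - 1"
    unfolding ceil_div_def by simp
  then have "ceil_div a b * b < a + b"
    using assms by linarith
  then have "real (ceil_div a b) - 1 < real a / real b"
    using assms by (simp add: less_divide_eq algebra_simps flip: of_nat_mult of_nat_add)
  ultimately show ?thesis
    by (simp add: ceiling_eq_iff)
qed

lemma ceiling_divide_le_divide_iff:
  assumes "0 < t" "0 < u"
  shows "real_of_int \<lceil>real a / real u\<rceil> \<le> real a / real t \<longleftrightarrow> ceil_div a u \<le> a div t"
proof -
  have "real_of_int \<lceil>real a / real u\<rceil> \<le> real a / real t \<longleftrightarrow> real (ceil_div a u) * real t \<le> real a"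
    using assms by (simp add: ceiling_divide_of_nat_eq le_divide_eq)
  also have "\<dots> \<longleftrightarrow> ceil_div a u \<le> a div t"
    using assms by (simp add: less_eq_div_iff_mult_less_eq flip: of_nat_mult)
  finally show ?thesis .
qed

lemma less_ceiling_divide_iff:
  assumes "0 < l"
  shows "int k < \<lceil>real N / real l\<rceil> \<longleftrightarrow> k * l < N"
  using ceil_div_le_iff[OF assms, of N k] by (simp add: ceiling_divide_of_nat_eq[OF assms] not_le[symmetric])

lemma ceil_div_add_dvd_left:
  assumes "0 < t" "t dvd x"
  shows "ceil_div (x + y) t = x div t + ceil_div y t"
proof -
  obtain q where "x = q * t"
    using assms(2) by (metis dvdE mult.commute)
  then have "ceil_div (x + y) t = ((y + t - 1) + q * t) div t"
    using assms(1) by (simp add: ceil_div_def algebra_simps)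
  also have "\<dots> = q + (y + t - 1) div t"
    by (rule div_mult_self1) (use assms(1) in simp)
  finally show ?thesis
    using assms(1) \<open>x = q * t\<close> by (simp add: ceil_div_def)
qed

lemma ceil_div_eq_div_if_dvd: "0 < t \<Longrightarrow> t dvd x \<Longrightarrow> ceil_div x t = x div t"
  using ceil_div_add_dvd_left[of t x 0] by simp

lemma ceil_div_add_if_dvd:
  assumes "0 < t" "t dvd x \<or> t dvd y"
  shows "ceil_div (x + y) t = ceil_div x t + ceil_div y t"
  using assms ceil_div_add_dvd_left[of t x y] ceil_div_add_dvd_left[of t y x]
  by (auto simp: ceil_div_eq_div_if_dvd add.commute)

lemma sum_additive_if_all_but_one_dvd:
  fixes g :: "nat \<Rightarrow> nat"
  assumes "finite I" "g 0 = 0"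
    and additive: "\<And>x y. t dvd x \<or> t dvd y \<Longrightarrow> g (x + y) = g x + g y"
    and "\<forall>i\<in>I. \<forall>j\<in>I. i \<noteq> j \<longrightarrow> t dvd a i \<or> t dvd a j"
  shows "(\<Sum>i\<in>I. g (a i)) = g (\<Sum>i\<in>I. a i)"
  using assms(1,4)
proof (induction I rule: finite_induct)
  case empty
  then show ?case using \<open>g 0 = 0\<close> by simp
next
  case (insert j I)
  have "t dvd a j \<or> t dvd (\<Sum>i\<in>I. a i)"
    using insert.hyps(2) insert.prems by (metis dvd_sum insert_iff)
  then show ?case
    using insert by (simp add: additive)
qed

lemma sum_div_if_all_but_one_dvd:
  fixes a :: "'i \<Rightarrow> nat" and t :: nat
  assumes "finite I" "\<forall>i\<in>I. \<forall>j\<in>I. i \<noteq> j \<longrightarrow> t dvd a i \<or> t dvd a j"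
  shows "(\<Sum>i\<in>I. a i div t) = (\<Sum>i\<in>I. a i) div t"
  by (rule sum_additive_if_all_but_one_dvd[where g = "\<lambda>x. x div t", OF assms(1) _ _ assms(2)])
    (auto simp: div_plus_div_distrib_dvd_left div_plus_div_distrib_dvd_right)

lemma sum_ceil_div_if_all_but_one_dvd:
  fixes a :: "'i \<Rightarrow> nat" and t :: nat
  assumes "finite I" "0 < t" "\<forall>i\<in>I. \<forall>j\<in>I. i \<noteq> j \<longrightarrow> t dvd a i \<or> t dvd a j"
  shows "(\<Sum>i\<in>I. ceil_div (a i) t) = ceil_div (\<Sum>i\<in>I. a i) t"
  by (rule sum_additive_if_all_but_one_dvd[where g = "\<lambda>x. ceil_div x t", OF assms(1) _ _ assms(3)])
    (use assms(2) in \<open>auto simp: ceil_div_add_if_dvd\<close>)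

lemma exists_sum_eq_between:
  fixes lo hi :: "'i \<Rightarrow> nat"
  assumes "finite I" "\<forall>i\<in>I. lo i \<le> hi i" "(\<Sum>i\<in>I. lo i) \<le> k" "k \<le> (\<Sum>i\<in>I. hi i)"
  shows "\<exists>p. (\<forall>i\<in>I. lo i \<le> p i \<and> p i \<le> hi i) \<and> (\<Sum>i\<in>I. p i) = k"
  using assms
proof (induction I arbitrary: k rule: finite_induct)
  case empty
  then show ?case by simp
next
  case (insert j I)
  define v where "v = min (hi j) (k - (\<Sum>i\<in>I. lo i))"
  have "(\<Sum>i\<in>I. lo i) \<le> (\<Sum>i\<in>I. hi i)"
    using insert.prems(1) by (intro sum_mono) auto
  then have "(\<Sum>i\<in>I. lo i) \<le> k - v" "k - v \<le> (\<Sum>i\<in>I. hi i)"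
    using insert by (auto simp: v_def min_def)
  then obtain p where p: "\<forall>i\<in>I. lo i \<le> p i \<and> p i \<le> hi i" "(\<Sum>i\<in>I. p i) = k - v"
    using insert.IH[of "k - v"] insert.prems(1) by auto
  have "(\<Sum>i\<in>I. (p(j := v)) i) = (\<Sum>i\<in>I. p i)"
    using insert.hyps(2) by (intro sum.cong) auto
  moreover have "lo j \<le> v" "v \<le> hi j" "v \<le> k"
    using insert by (auto simp: v_def)
  ultimately show ?case
    using insert.hyps p by (intro exI[of _ "p(j := v)"]) auto
qed

lemma card_residue_class_bounds:
  fixes p d s a :: nat
  assumes "d < p" "p * s \<le> a" "a \<le> p * (s + 1)"
  shows "card {v. v < a \<and> v mod p = d} \<in> {s..s + 1}"
proof -
  define Q where "Q = {q. q * p + d < a}"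
  have "{v. v < a \<and> v mod p = d} = (\<lambda>q. q * p + d) ` Q"
  proof (intro set_eqI iffI)
    fix v
    assume "v \<in> {v. v < a \<and> v mod p = d}"
    then show "v \<in> (\<lambda>q. q * p + d) ` Q"
      unfolding Q_def by (intro image_eqI[of _ _ "v div p"]) auto
  qed (use assms(1) Q_def in auto)
  moreover have "inj_on (\<lambda>q. q * p + d) Q"
    using assms(1) by (auto simp: inj_on_def)
  moreover have "{..<s} \<subseteq> Q"
  proof
    fix q
    assume "q \<in> {..<s}"
    then have "q * p + p \<le> s * p"
      using mult_le_mono1[of "Suc q" s p] by simp
    then show "q \<in> Q"
      using assms unfolding Q_def by (simp add: mult.commute)
  qed
  moreover have "Q \<subseteq> {..<s + 1}"
  proof
    fix q
    assume "q \<in> Q"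
    then have "q * p < (s + 1) * p"
      using assms(3) unfolding Q_def by (simp add: mult.commute)
    then show "q \<in> {..<s + 1}"
      by (metis lessThan_iff mult_less_cancel2)
  qed
  moreover have "finite Q"
    using calculation(4) finite_subset by blast
  ultimately show ?thesis
    using card_mono[of Q "{..<s}"] card_mono[of "{..<s + 1}" Q] by (simp add: card_image)
qed

lemma cmp_vertices_Suc:
  "cmp_vertices (Suc r) a = cmp_vertices r a \<union> {(i, v). i = Suc r \<and> v < a (Suc r)}"
  by (auto simp: cmp_vertices_def le_Suc_eq)

lemma complete_multipartite_coloring_class_sizes:
  assumes "\<forall>i\<in>{1..r}. p i * s \<le> a i \<and> a i \<le> p i * (s + 1)"
  shows "\<exists>f. proper_coloring (cmp_vertices r a) cmp_adj (\<Sum>i=1..r. p i) f \<and>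
    (\<forall>c\<in>{1..\<Sum>i=1..r. p i}. card {x\<in>cmp_vertices r a. f x = c} \<in> {s..s + 1})"
  using assms
proof (induction r)
  case 0
  then show ?case
    by (auto simp: cmp_vertices_def proper_coloring_def)
next
  case (Suc r)
  define V where "V = cmp_vertices r a"
  define W where "W = {(i, v). i = Suc r \<and> v < a (Suc r)}"
  define K where "K = (\<Sum>i=1..r. p i)"
  define P where "P = p (Suc r)"
  obtain f where f: "proper_coloring V cmp_adj K f"
    and f_classes: "\<forall>c\<in>{1..K}. card {x\<in>V. f x = c} \<in> {s..s + 1}"
    using Suc by (auto simp: V_def K_def)
  have P: "P * s \<le> a (Suc r)" "a (Suc r) \<le> P * (s + 1)"
    using Suc.prems by (auto simp: P_def)
  define g where "g x = (if fst x = Suc r then K + snd x mod P + 1 else f x)" for x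
  have g_V: "g x = f x" "g x \<in> {1..K}" if "x \<in> V" for x
    using that f by (auto simp: g_def V_def cmp_vertices_def proper_coloring_def)
  have g_W: "g x \<in> {K + 1..K + P}" if "x \<in> W" for x
  proof -
    have "0 < P"
      using that P(2) by (auto simp: W_def intro: Nat.gr0I)
    then show ?thesis
      using that by (auto simp: g_def W_def Suc_le_eq)
  qed
  have "proper_coloring (V \<union> W) cmp_adj (K + P) g"
    unfolding proper_coloring_def
  proof (intro conjI ballI impI)
    fix x y
    assume x: "x \<in> V \<union> W" and y: "y \<in> V \<union> W" and "cmp_adj x y"
    consider "x \<in> V" "y \<in> V" | "x \<in> W" "y \<in> W" | "g x \<le> K" "K < g y" | "g y \<le> K" "K < g x"
      using x y g_V g_W by fastforce
    then show "g x \<noteq> g y"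
    proof cases
      case 1
      then show ?thesis
        using f g_V \<open>cmp_adj x y\<close> by (simp add: proper_coloring_def)
    next
      case 2
      then show ?thesis
        using \<open>cmp_adj x y\<close> by (auto simp: W_def cmp_adj_def)
    qed simp_all
  next
    fix x
    assume "x \<in> V \<union> W"
    then show "g x \<in> {1..K + P}"
      using g_V g_W by fastforce
  qed
  moreover have "card {x\<in>V \<union> W. g x = c} \<in> {s..s + 1}" if c: "c \<in> {1..K + P}" for c
  proof (cases "c \<le> K")
    case True
    then have "{x\<in>V \<union> W. g x = c} = {x\<in>V. f x = c}"
      using g_V g_W by force
    then show ?thesis
      using f_classes c True by simp
  next
    case False
    then have "{x\<in>V \<union> W. g x = c} = {x\<in>W. snd x mod P = c - K - 1}"
      using g_V c by (force simp: W_def g_def)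
    also have "\<dots> = Pair (Suc r) ` {v. v < a (Suc r) \<and> v mod P = c - K - 1}"
      by (auto simp: W_def)
    finally have "card {x\<in>V \<union> W. g x = c} = card {v. v < a (Suc r) \<and> v mod P = c - K - 1}"
      by (simp add: card_image inj_on_def)
    moreover have "c - K - 1 < P"
      using c False by simp
    ultimately show ?thesis
      using card_residue_class_bounds[OF _ P] by simp
  qed
  moreover have "cmp_vertices (Suc r) a = V \<union> W" "(\<Sum>i=1..Suc r. p i) = K + P"
    by (simp_all add: V_def W_def K_def P_def cmp_vertices_Suc)
  ultimately show ?case
    by auto
qed

definition equitable_class_size :: "'i set \<Rightarrow> ('i \<Rightarrow> nat) \<Rightarrow> nat \<Rightarrow> nat \<Rightarrow> bool" where
  "equitable_class_size I a k s \<longleftrightarrow> 0 < s \<and> (\<forall>i\<in>I. ceil_div (a i) (s + 1) \<le> a i div s) \<and>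
     (\<Sum>i\<in>I. ceil_div (a i) (s + 1)) \<le> k \<and> k \<le> (\<Sum>i\<in>I. a i div s)"

lemma equitably_colorable_if_equitable_class_size:
  assumes "equitable_class_size {1..r} a k s"
  shows "equitably_colorable (cmp_vertices r a) cmp_adj k"
proof -
  obtain p where p: "\<forall>i\<in>{1..r}. ceil_div (a i) (s + 1) \<le> p i \<and> p i \<le> a i div s"
    and "(\<Sum>i=1..r. p i) = k"
    using exists_sum_eq_between[of "{1..r}" "\<lambda>i. ceil_div (a i) (s + 1)" "\<lambda>i. a i div s" k] assms
    unfolding equitable_class_size_def by auto
  moreover have "\<forall>i\<in>{1..r}. p i * s \<le> a i \<and> a i \<le> p i * (s + 1)"
    using p assms by (simp add: equitable_class_size_def ceil_div_le_iff less_eq_div_iff_mult_less_eq)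
  ultimately obtain f where f: "proper_coloring (cmp_vertices r a) cmp_adj k f"
    and classes: "\<forall>c\<in>{1..k}. card {x\<in>cmp_vertices r a. f x = c} \<in> {s..s + 1}"
    using complete_multipartite_coloring_class_sizes by blast
  have "equitable_coloring (cmp_vertices r a) cmp_adj k f"
    unfolding equitable_coloring_def
  proof (intro conjI ballI f)
    fix c d
    assume "c \<in> {1..k}" "d \<in> {1..k}"
    then have "card {x\<in>cmp_vertices r a. f x = c} \<le> s + 1" "s \<le> card {x\<in>cmp_vertices r a. f x = d}"
      using classes by auto
    then show "card {x\<in>cmp_vertices r a. f x = c} \<le> card {x\<in>cmp_vertices r a. f x = d} + 1"
      by linarith
  qed
  then show ?thesis
    unfolding equitably_colorable_def by blast
qed

lemma dvd_if_sum_ceil_div_mult_le: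
  assumes "finite I" "0 < h" "(\<Sum>i\<in>I. ceil_div (a i) h) * h \<le> (\<Sum>i\<in>I. a i)"
  shows "\<forall>i\<in>I. h dvd a i"
proof
  fix i
  assume "i \<in> I"
  have le: "a j \<le> ceil_div (a j) h * h" for j
    using le_ceil_div_mult[OF assms(2)] .
  then have "(\<Sum>i\<in>I. a i) \<le> (\<Sum>i\<in>I. ceil_div (a i) h * h)"
    by (intro sum_mono)
  then have "(\<Sum>i\<in>I. a i) = (\<Sum>i\<in>I. ceil_div (a i) h * h)"
    using assms(3) by (simp add: sum_distrib_right)
  then have "a i = ceil_div (a i) h * h"
    using le \<open>i \<in> I\<close> assms(1)
    by (intro sum_mono_inv[where f = a and g = "\<lambda>j. ceil_div (a j) h * h"]) auto
  then show "h dvd a i"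
    by (metis dvd_triv_right)
qed

lemma equitable_class_size_at_exact_multiple:
  assumes "finite I" "0 < h"
    and "(\<Sum>i\<in>I. ceil_div (a i) h) \<le> k" "k * h \<le> (\<Sum>i\<in>I. a i)"
  shows "equitable_class_size I a k h"
proof -
  have "(\<Sum>i\<in>I. ceil_div (a i) h) * h \<le> (\<Sum>i\<in>I. a i)"
    using assms(3,4) mult_le_mono1 order_trans by blast
  then have dvd: "\<forall>i\<in>I. h dvd a i"
    using dvd_if_sum_ceil_div_mult_le assms(1,2) by blast
  have le_div: "ceil_div (a i) (h + 1) \<le> a i div h" if "i \<in> I" for i
  proof -
    have "a i \<le> a i div h * (h + 1)"
      using dvd that by (metis dvd_div_mult_self le_add1 mult_le_mono2 mult.commute)
    then show ?thesis
      by (simp add: ceil_div_le_iff)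
  qed
  have "(\<Sum>i\<in>I. a i div h) = (\<Sum>i\<in>I. ceil_div (a i) h)"
    using dvd assms(2) by (simp add: ceil_div_eq_div_if_dvd)
  moreover have "k * h \<le> (\<Sum>i\<in>I. a i div h) * h"
    using assms(4) dvd by (simp add: sum_distrib_right)
  ultimately show ?thesis
    using le_div assms(2,3) sum_mono[of I "\<lambda>i. ceil_div (a i) (h + 1)" "\<lambda>i. a i div h"]
    unfolding equitable_class_size_def by auto
qed

lemma equitable_class_size_exists:
  fixes a :: "'i \<Rightarrow> nat" and I :: "'i set"
  defines "N \<equiv> \<Sum>i\<in>I. a i"
  assumes "finite I" "0 < l" "l \<le> h" "0 < N" "l * k \<le> N"
    and base: "\<forall>i\<in>I. ceil_div (a i) (l + 1) \<le> a i div l" "N div l \<le> (\<Sum>i\<in>I. a i div l)"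
    and above: "\<And>t. l < t \<Longrightarrow> t < h \<Longrightarrow> (\<forall>i\<in>I. ceil_div (a i) (t + 1) \<le> a i div t) \<and>
      (\<forall>i\<in>I. \<forall>j\<in>I. i \<noteq> j \<longrightarrow> t dvd a i \<or> t dvd a j)"
    and top: "(\<Sum>i\<in>I. ceil_div (a i) h) \<le> k"
  shows "\<exists>s. equitable_class_size I a k s"
proof -
  have "N \<le> (\<Sum>i\<in>I. ceil_div (a i) h) * h"
    unfolding N_def sum_distrib_right using assms(3,4) by (intro sum_mono le_ceil_div_mult) simp
  also have "\<dots> \<le> k * h"
    using top by simp
  finally have N_le: "N \<le> k * h" .
  then have "0 < k"
    using \<open>0 < N\<close> by (cases k) auto
  define s where "s = N div k"
  have s_k: "s * k \<le> N" "N < (s + 1) * k"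
    using \<open>0 < k\<close> by (simp_all add: s_def dividend_less_div_times)
  have "l \<le> s"
    using \<open>l * k \<le> N\<close> \<open>0 < k\<close> by (simp add: s_def less_eq_div_iff_mult_less_eq)
  have "s \<le> h"
    using s_k(1) N_le \<open>0 < k\<close> by (metis le_trans mult.commute mult_le_cancel2)
  have sums_div: "(\<Sum>i\<in>I. a i div t) = N div t" "(\<Sum>i\<in>I. ceil_div (a i) t) = ceil_div N t"
    if "l < t" "t < h" for t
    using above[OF that] sum_div_if_all_but_one_dvd[OF \<open>finite I\<close>]
      sum_ceil_div_if_all_but_one_dvd[OF \<open>finite I\<close>] that \<open>0 < l\<close>
    unfolding N_def by auto
  show ?thesis
  proof (cases "s = h")
    case True
    then have "k * h \<le> N"
      using s_k(1) by (simp add: mult.commute)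
    then show ?thesis
      using equitable_class_size_at_exact_multiple[OF \<open>finite I\<close> _ top] assms(3,4)
      unfolding N_def by blast
  next
    case False
    then have "s < h"
      using \<open>s \<le> h\<close> by simp
    have "(\<Sum>i\<in>I. ceil_div (a i) (s + 1)) \<le> k"
    proof (cases "s + 1 = h")
      case True
      then show ?thesis using top by simp
    next
      case False
      then have "(\<Sum>i\<in>I. ceil_div (a i) (s + 1)) = ceil_div N (s + 1)"
        using sums_div(2) \<open>l \<le> s\<close> \<open>s < h\<close> by simp
      also have "\<dots> \<le> k"
        using s_k(2) by (simp add: ceil_div_le_iff mult.commute)
      finally show ?thesis .
    qed
    moreover have "k \<le> N div s"
      using s_k(1) \<open>0 < l\<close> \<open>l \<le> s\<close> by (simp add: less_eq_div_iff_mult_less_eq mult.commute)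
    moreover have "(\<forall>i\<in>I. ceil_div (a i) (s + 1) \<le> a i div s) \<and> N div s \<le> (\<Sum>i\<in>I. a i div s)"
      using base above[of s] sums_div(1)[of s] \<open>l \<le> s\<close> \<open>s < h\<close>
      by (cases "s = l") auto
    ultimately show ?thesis
      using \<open>0 < l\<close> \<open>l \<le> s\<close> unfolding equitable_class_size_def by (intro exI[of _ s]) auto
  qed
qed

lemma below_least_bad_threshold:
  fixes a :: "'i \<Rightarrow> nat"
  assumes h: "h = (LEAST t::nat. t \<ge> b \<and>
      ((\<exists>i\<in>I. real (a i) / real t < real_of_int \<lceil>real (a i) / real (t + 1)\<rceil>) \<or>
       (\<exists>i\<in>I. \<exists>j\<in>I. i \<noteq> j \<and> \<not> t dvd a i \<and> \<not> t dvd a j)))"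
    and "0 < b" "i\<^sub>0 \<in> I" "0 < a i\<^sub>0"
  shows "b \<le> h"
    and "\<And>t. b \<le> t \<Longrightarrow> t < h \<Longrightarrow> (\<forall>i\<in>I. ceil_div (a i) (t + 1) \<le> a i div t) \<and>
      (\<forall>i\<in>I. \<forall>j\<in>I. i \<noteq> j \<longrightarrow> t dvd a i \<or> t dvd a j)"
proof -
  define bad where "bad t \<longleftrightarrow>
      (\<exists>i\<in>I. real (a i) / real t < real_of_int \<lceil>real (a i) / real (t + 1)\<rceil>) \<or>
      (\<exists>i\<in>I. \<exists>j\<in>I. i \<noteq> j \<and> \<not> t dvd a i \<and> \<not> t dvd a j)" for t
  have h_eq: "h = (LEAST t. b \<le> t \<and> bad t)"
    unfolding h bad_def ..
  \<comment> \<open>any t exceeding a part size is bad, so the least bad threshold exists\<close>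
  have "real (a i\<^sub>0) / real (b + a i\<^sub>0) < 1" "1 \<le> real_of_int \<lceil>real (a i\<^sub>0) / real (b + a i\<^sub>0 + 1)\<rceil>"
    using assms(2,4) by simp_all
  then have "real (a i\<^sub>0) / real (b + a i\<^sub>0) < real_of_int \<lceil>real (a i\<^sub>0) / real (b + a i\<^sub>0 + 1)\<rceil>"
    by linarith
  then have "b \<le> b + a i\<^sub>0 \<and> bad (b + a i\<^sub>0)"
    unfolding bad_def using assms(3) by (auto intro!: bexI[of _ i\<^sub>0])
  then show "b \<le> h"
    unfolding h_eq by (metis (mono_tags, lifting) LeastI)
  show "(\<forall>i\<in>I. ceil_div (a i) (t + 1) \<le> a i div t) \<and>
      (\<forall>i\<in>I. \<forall>j\<in>I. i \<noteq> j \<longrightarrow> t dvd a i \<or> t dvd a j)" if "b \<le> t" "t < h" for t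
  proof -
    have pos: "0 < t" "0 < t + 1"
      using that assms(2) by simp_all
    have "\<not> bad t"
      using that not_less_Least unfolding h_eq by blast
    then show ?thesis
      unfolding bad_def not_le[symmetric] ceiling_divide_le_divide_iff[OF pos] by blast
  qed
qed

theorem mainTheorem6:
  fixes r n :: nat and ms :: "nat \<Rightarrow> nat" and m h k :: nat
  assumes r_pos: "r \<ge> 1" and n_pos: "n \<ge> 1"
    and ms_pos: "\<forall>i\<in>{1..r}. ms i \<ge> 1"
    and m_def: "m = (\<Sum>i=1..r. ms i)"
    and m_le: "m \<le> n"
    and floor_cond: "(\<Sum>i=1..r. \<lfloor>real (ms i * n) / real (m + 1)\<rfloor>) \<ge> \<lfloor>real (m * n) / real (m + 1)\<rfloor>"
    and ceil_cond: "\<forall>i\<in>{1..r}. real (ms i * n) / real (m + 1) \<ge> real_of_int \<lceil>real (ms i * n) / real (m + 2)\<rceil>"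
    and h_def: "h = (LEAST t::nat. t \<ge> m + 2 \<and>
         ((\<exists>i\<in>{1..r}. real (ms i * n) / real t < real_of_int \<lceil>real (ms i * n) / real (t + 1)\<rceil>) \<or>
          (\<exists>i\<in>{1..r}. \<exists>j\<in>{1..r}. i \<noteq> j \<and> \<not> t dvd ms i * n \<and> \<not> t dvd ms j * n)))"
    and k_lo: "(\<Sum>i=1..r. \<lceil>real (ms i * n) / real h\<rceil>) \<le> int k"
    and k_hi: "int k \<le> \<lceil>real (m * n) / real (m + 1)\<rceil> - 1"
  shows "equitably_colorable (cmp_vertices r (\<lambda>i. ms i * n)) cmp_adj k"
proof -
  define a where "a i = ms i * n" for i
  have N_eq: "m * n = (\<Sum>i=1..r. a i)"
    unfolding a_def m_def by (simp add: sum_distrib_right)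
  have "1 \<in> {1..r}" "(0::nat) < m + 2"
    using r_pos by simp_all
  have "0 < a 1"
    using ms_pos n_pos \<open>1 \<in> {1..r}\<close> by (simp add: a_def Suc_le_eq)
  note threshold = below_least_bad_threshold[OF h_def[folded a_def] \<open>0 < m + 2\<close> \<open>1 \<in> {1..r}\<close> \<open>0 < a 1\<close>]
  have pos: "0 < h" "(0::nat) < m + 1" "0 < m * n"
    using threshold(1) member_le_sum[of 1 "{1..r}" a] N_eq \<open>1 \<in> {1..r}\<close> \<open>0 < a 1\<close> by simp_all
  have "\<forall>i\<in>{1..r}. ceil_div (a i) (m + 2) \<le> a i div (m + 1)"
    using ceil_cond unfolding a_def ceiling_divide_le_divide_iff[OF pos(2) \<open>0 < m + 2\<close>] .
  moreover have "m * n div (m + 1) \<le> (\<Sum>i=1..r. a i div (m + 1))"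
    using floor_cond unfolding a_def floor_divide_of_nat_eq by (simp flip: of_nat_sum)
  moreover have "(\<Sum>i=1..r. ceil_div (a i) h) \<le> k"
    using k_lo unfolding a_def ceiling_divide_of_nat_eq[OF pos(1)] by (simp flip: of_nat_sum)
  moreover have "(m + 1) * k < m * n"
    using k_hi less_ceiling_divide_iff[OF pos(2), of k "m * n"] by (simp add: mult.commute)
  ultimately obtain s where "equitable_class_size {1..r} a k s"
    using equitable_class_size_exists[of "{1..r}" "m + 1" h a k] threshold pos
    unfolding N_eq by (force simp: Suc_le_eq)
  then show ?thesis
    using equitably_colorable_if_equitable_class_size unfolding a_def by blast
qed

end
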